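(* Let $n\ge2$, let $F\in C^3(\mathbb{R}^n\setminus\{0\})$ be a strongly convex norm on $\mathbb{R}^n$, and let $u$ be a $C^2$ function on an open set $U\subset\mathbb{R}^n$. With the summation convention, $F=F(\nabla u)$, $F_i=F_{\xi_i}(\nabla u)$, $a_{ij}=\frac{\partial^2}{\partial\xi_i\partial\xi_j}(\tfrac12F^2)(\nabla u)$ and $u_{ij}=\partial^2u/\partial x_i\partial x_j$, at every point where $\nabla u\ne0$ one has $$a_{ij}a_{kl}u_{ik}u_{jl}\ge\frac{(a_{ij}u_{ij})^2}{n}+\frac{n}{n-1}\Big(\frac{a_{ij}u_{ij}}{n}-F_iF_ju_{ij}\Big)^2.$$
   Context: A norm on $\mathbb{R}^n$ is a convex, even, positively $1$-homogeneous function $F:\mathbb{R}^n\to[0,\infty)$, $C^1$ away from $0$, positive away from $0$. It is strongly convex if $\mathrm{Hess}(F^2)$ is positive definite on $\mathbb{R}^n\setminus\{0\}$. *)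

theory Defs
  imports "HOL-Analysis.Analysis"
begin

definition pd :: "'n::finite \<Rightarrow> (real^'n \<Rightarrow> real) \<Rightarrow> real^'n \<Rightarrow> real" where
  "pd i f x = frechet_derivative f (at x) (axis i 1)"

fun Ck :: "nat \<Rightarrow> (real^'n::finite \<Rightarrow> real) \<Rightarrow> (real^'n) set \<Rightarrow> bool" where
  "Ck 0 f S = continuous_on S f"
| "Ck (Suc k) f S = ((\<forall>x\<in>S. f differentiable (at x)) \<and> (\<forall>i. Ck k (pd i f) S))"

definition grad :: "(real^'n::finite \<Rightarrow> real) \<Rightarrow> real^'n \<Rightarrow> real^'n" where
  "grad f x = (\<chi> i. pd i f x)"

definition is_Norm :: "(real^'n::finite \<Rightarrow> real) \<Rightarrow> bool" where
  "is_Norm F \<longleftrightarrow> convex_on UNIV F \<and> (\<forall>x. F (- x) = F x)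
     \<and> (\<forall>t>0. \<forall>x. F (t *\<^sub>R x) = t * F x)
     \<and> Ck 1 F (- {0}) \<and> (\<forall>x. F x \<ge> 0) \<and> (\<forall>x. x \<noteq> 0 \<longrightarrow> F x > 0)"

definition strongly_convex_Norm :: "(real^'n::finite \<Rightarrow> real) \<Rightarrow> bool" where
  "strongly_convex_Norm F \<longleftrightarrow> is_Norm F \<and>
     (\<forall>\<xi>. \<xi> \<noteq> 0 \<longrightarrow> (\<forall>v. v \<noteq> 0 \<longrightarrow>
        (\<Sum>i\<in>UNIV. \<Sum>j\<in>UNIV. pd i (pd j (\<lambda>z. (F z)^2)) \<xi> * v$i * v$j) > 0))"

end

theory Submission
  imports Defs
begin

text \<open>Strong convexity makes \<open>a = \<nabla>\<^sup>2(F\<^sup>2/2)\<close> positive definite, so \<open>a = C\<^sup>T C\<close> (Cholesky), and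
  with \<open>M = C H C\<^sup>T\<close> for the Hessian \<open>H\<close> of \<open>u\<close> the left side is \<open>|M|\<^sup>2\<close> and \<open>a\<^sub>i\<^sub>j u\<^sub>i\<^sub>j = tr M\<close>.
  Euler's identities for the 1-homogeneous \<open>F\<close> at \<open>\<xi> = \<nabla>u\<close> give \<open>a \<xi> = F \<nabla>F\<close> and
  \<open>\<nabla>F \<cdot> \<xi> = F\<close>, so \<open>w = C \<xi> / F\<close> is a unit vector with \<open>F\<^sub>i F\<^sub>j u\<^sub>i\<^sub>j = w\<^sup>T M w\<close>. The inequality
  is then Cauchy--Schwarz between the trace-free part of \<open>M\<close> and the trace-free matrix
  \<open>n w w\<^sup>T - I\<close>, whose squared norm is \<open>n (n - 1)\<close>. Symmetry of \<open>a\<close> needs Schwarz's theorem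
  for \<open>F\<close>.\<close>

lemma Cauchy_Schwarz_double_sum:
  fixes B Z :: "'a::finite \<Rightarrow> 'a \<Rightarrow> real"
  shows "(\<Sum>p\<in>UNIV. \<Sum>q\<in>UNIV. B p q * Z p q)^2
    \<le> (\<Sum>p\<in>UNIV. \<Sum>q\<in>UNIV. (B p q)^2) * (\<Sum>p\<in>UNIV. \<Sum>q\<in>UNIV. (Z p q)^2)"
proof -
  have pairs: "(\<Sum>p\<in>UNIV. \<Sum>q\<in>UNIV. f p q) = (\<Sum>x\<in>UNIV \<times> UNIV. f (fst x) (snd x))"
    for f :: "'a \<Rightarrow> 'a \<Rightarrow> real"
    unfolding sum.cartesian_product by (simp only: case_prod_beta')
  show ?thesis unfolding pairs by (rule Cauchy_Schwarz_ineq_sum)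
qed

lemma sum_sq_scaled_rank_one_minus_identity:
  fixes w :: "'n::finite \<Rightarrow> real"
  assumes w1: "(\<Sum>p\<in>UNIV. (w p)^2) = 1"
  shows "(\<Sum>p\<in>UNIV. \<Sum>q\<in>UNIV. (c * w p * w q - (if p = q then 1 else 0))^2)
    = c^2 - 2 * c + real CARD('n)"
proof -
  have "(c * w p * w q - (if p = q then 1 else 0))^2
      = c^2 * ((w p)^2 * (w q)^2) - (if p = q then 2 * c * (w p)^2 - 1 else 0)" for p q
    by (auto simp: power2_eq_square algebra_simps)
  moreover have "(\<Sum>p\<in>UNIV. \<Sum>q\<in>UNIV. c^2 * ((w p)^2 * (w q)^2))
      = c^2 * ((\<Sum>p\<in>UNIV. (w p)^2) * (\<Sum>q\<in>UNIV. (w q)^2))"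
    by (simp add: sum_product sum_distrib_left mult_ac)
  ultimately show ?thesis
    using w1 by (simp add: sum_subtractf sum_distrib_left[symmetric])
qed

lemma sum_sq_entries_lower_bound:
  fixes M :: "'n::finite \<Rightarrow> 'n \<Rightarrow> real" and w :: "'n \<Rightarrow> real"
  assumes n2: "CARD('n) \<ge> 2" and w1: "(\<Sum>p\<in>UNIV. (w p)^2) = 1"
  shows "(\<Sum>p\<in>UNIV. \<Sum>q\<in>UNIV. (M p q)^2) \<ge> (\<Sum>p\<in>UNIV. M p p)^2 / real CARD('n)
     + real CARD('n) / (real CARD('n) - 1) * ((\<Sum>p\<in>UNIV. M p p) / real CARD('n)
         - (\<Sum>p\<in>UNIV. \<Sum>q\<in>UNIV. w p * w q * M p q))^2"
proof -
  define n where "n = real CARD('n)"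
  define T where "T = (\<Sum>p\<in>UNIV. M p p)"
  define Q where "Q = (\<Sum>p\<in>UNIV. \<Sum>q\<in>UNIV. w p * w q * M p q)"
  define SM where "SM = (\<Sum>p\<in>UNIV. \<Sum>q\<in>UNIV. (M p q)^2)"
  define B where "B p q = M p q - (if p = q then T/n else 0)" for p q
  define Z where "Z p q = n * w p * w q - (if p = q then 1 else 0)" for p q
  have n1: "n > 1" using n2 unfolding n_def by simp
  have BB: "(\<Sum>p\<in>UNIV. \<Sum>q\<in>UNIV. (B p q)^2) = SM - T^2/n"
  proof -
    have "(B p q)^2 = (M p q)^2 - (if p = q then 2 * (T/n) * M p q - (T/n)^2 else 0)" for p q
      unfolding B_def by (auto simp: power2_eq_square algebra_simps)
    hence "(\<Sum>p\<in>UNIV. \<Sum>q\<in>UNIV. (B p q)^2) = SM - (\<Sum>p\<in>UNIV. 2 * (T/n) * M p p - (T/n)^2)"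
      by (simp add: SM_def sum_subtractf)
    also have "\<dots> = SM - (2 * (T/n) * T - n * (T/n)^2)"
      by (simp add: sum_subtractf sum_distrib_left T_def n_def)
    also have "\<dots> = SM - T^2/n" using n1 by (simp add: field_simps power2_eq_square)
    finally show ?thesis .
  qed
  have BZ: "(\<Sum>p\<in>UNIV. \<Sum>q\<in>UNIV. B p q * Z p q) = n * Q - T"
  proof -
    have "B p q * Z p q = n * (w p * w q * M p q)
         - (if p = q then M p q + n * (T/n) * (w p)^2 - T/n else 0)" for p q
      unfolding B_def Z_def by (auto simp: algebra_simps power2_eq_square)
    hence "(\<Sum>p\<in>UNIV. \<Sum>q\<in>UNIV. B p q * Z p q) = n * Q - (T + n * (T/n) * 1 - n * (T/n))"
      unfolding w1[symmetric]
      by (simp add: sum_subtractf Q_def sum_distrib_left T_def n_def sum.distrib)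
    thus ?thesis by simp
  qed
  have ZZ: "(\<Sum>p\<in>UNIV. \<Sum>q\<in>UNIV. (Z p q)^2) = n * (n - 1)"
    using sum_sq_scaled_rank_one_minus_identity[OF w1, of n]
    by (simp add: Z_def n_def power2_eq_square algebra_simps)
  have "n^2 * (T/n - Q)^2 = (n * Q - T)^2"
    using n1 by (simp add: field_simps power2_eq_square)
  also have "\<dots> \<le> (SM - T^2/n) * (n * (n - 1))"
    using Cauchy_Schwarz_double_sum[of B Z] BB BZ ZZ by simp
  finally have CS: "n^2 * (T/n - Q)^2 \<le> (SM - T^2/n) * (n * (n - 1))" .
  have "n / (n - 1) * (T/n - Q)^2 = n^2 * (T/n - Q)^2 / (n * (n - 1))"
    using n1 by (simp add: field_simps power2_eq_square)
  also have "\<dots> \<le> SM - T^2/n"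
    using CS n1 by (simp add: divide_le_eq)
  finally have "n / (n - 1) * (T/n - Q)^2 \<le> SM - T^2/n" .
  thus ?thesis unfolding SM_def T_def Q_def n_def by simp
qed

lemma positive_definite_diagonal_pos:
  fixes a :: "'a \<Rightarrow> 'a \<Rightarrow> real"
  assumes "finite I" "m \<in> I"
    and pd: "\<And>w. \<exists>i\<in>I. w i \<noteq> 0 \<Longrightarrow> 0 < (\<Sum>i\<in>I. \<Sum>j\<in>I. a i j * w i * w j)"
  shows "0 < a m m"
proof -
  have "(\<Sum>i\<in>I. \<Sum>j\<in>I. a i j * of_bool (i = m) * of_bool (j = m))
      = (\<Sum>i\<in>I. if i = m then (\<Sum>j\<in>I. if j = m then a m m else 0) else 0)"
    by (auto intro!: sum.cong)
  also have "\<dots> = a m m"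
    using assms(1,2) by simp
  finally have "(\<Sum>i\<in>I. \<Sum>j\<in>I. a i j * of_bool (i = m) * of_bool (j = m)) = a m m" .
  with pd[of "\<lambda>i. of_bool (i = m)"] assms(2) show ?thesis by auto
qed

lemma Schur_complement_positive_definite:
  fixes a :: "'a \<Rightarrow> 'a \<Rightarrow> real"
  assumes I: "finite I" "m \<notin> I"
    and sym: "\<And>i j. i \<in> insert m I \<Longrightarrow> j \<in> insert m I \<Longrightarrow> a i j = a j i"
    and pd: "\<And>w. \<exists>i\<in>insert m I. w i \<noteq> 0 \<Longrightarrow> 0 < (\<Sum>i\<in>insert m I. \<Sum>j\<in>insert m I. a i j * w i * w j)"
    and w: "\<exists>i\<in>I. w i \<noteq> 0"
  shows "0 < (\<Sum>i\<in>I. \<Sum>j\<in>I. (a i j - a i m * a m j / a m m) * w i * w j)"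
proof -
  have amm: "0 < a m m"
    using positive_definite_diagonal_pos[OF _ _ pd] I by simp
  define b where "b = (\<Sum>j\<in>I. a m j * w j)"
  define t where "t = - b / a m m"
  define q where "q = (\<Sum>i\<in>I. \<Sum>j\<in>I. a i j * w i * w j)"
  have b_sym: "(\<Sum>i\<in>I. a i m * w i) = b"
    unfolding b_def using sym by (intro sum.cong) auto
  \<comment> \<open>Extending \<open>w\<close> by the minimizing value \<open>t\<close> at \<open>m\<close> turns the full form into the Schur form.\<close>
  define w' where "w' = w(m := t)"
  have w'I: "w' i = w i" if "i \<in> I" for i
    using I that by (auto simp: w'_def)
  have w'm: "w' m = t"
    by (simp add: w'_def)
  have inner: "(\<Sum>j\<in>insert m I. a i j * w' i * w' j) = a i m * w' i * t + w' i * (\<Sum>j\<in>I. a i j * w j)"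
    for i using I by (simp add: sum_distrib_left w'm w'I mult_ac cong: sum.cong)
  have "0 < (\<Sum>i\<in>insert m I. \<Sum>j\<in>insert m I. a i j * w' i * w' j)"
    using w w'I by (intro pd) auto
  also have "\<dots> = (\<Sum>i\<in>insert m I. a i m * w' i * t + w' i * (\<Sum>j\<in>I. a i j * w j))"
    by (simp only: inner)
  also have "\<dots> = (a m m * t * t + t * b) + (\<Sum>i\<in>I. (a i m * w i) * t + (\<Sum>j\<in>I. a i j * w i * w j))"
    using I by (simp add: w'm w'I b_def sum_distrib_left mult_ac cong: sum.cong)
  also have "\<dots> = a m m * t * t + 2 * b * t + q"
    using b_sym by (simp add: sum.distrib sum_distrib_right[symmetric] q_def)
  also have "\<dots> = q - b^2 / a m m"
    using amm unfolding t_def by (simp add: field_simps power2_eq_square)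
  also have "\<dots> = (\<Sum>i\<in>I. \<Sum>j\<in>I. (a i j - a i m * a m j / a m m) * w i * w j)"
  proof -
    have "(\<Sum>i\<in>I. \<Sum>j\<in>I. (a i m * w i) * (a m j * w j) / a m m) = (\<Sum>i\<in>I. a i m * w i) * b / a m m"
      unfolding b_def by (simp only: sum_product sum_divide_distrib)
    moreover have "(a i j - a i m * a m j / a m m) * w i * w j
        = a i j * w i * w j - (a i m * w i) * (a m j * w j) / a m m" for i j
      by (simp add: algebra_simps)
    ultimately show ?thesis
      using b_sym by (simp add: q_def sum_subtractf power2_eq_square)
  qed
  finally show ?thesis .
qed

text \<open>One step of the Cholesky factorization; the new row is \<open>a m i / \<surd>(a m m)\<close>.\<close>

lemma Gram_factor_insert:
  fixes a c' :: "'a \<Rightarrow> 'a \<Rightarrow> real"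
  assumes I: "finite I" "m \<notin> I" and amm: "0 < a m m"
    and sym: "\<And>i j. i \<in> insert m I \<Longrightarrow> j \<in> insert m I \<Longrightarrow> a i j = a j i"
    and c': "\<And>i j. i \<in> I \<Longrightarrow> j \<in> I \<Longrightarrow> a i j - a i m * a m j / a m m = (\<Sum>k\<in>I. c' k i * c' k j)"
  shows "\<exists>c. \<forall>i\<in>insert m I. \<forall>j\<in>insert m I. a i j = (\<Sum>k\<in>insert m I. c k i * c k j)"
proof (intro exI ballI)
  define c where "c k i = (if k = m then a m i / sqrt (a m m) else if i = m then 0 else c' k i)" for k i
  have cm: "c m i * c m j = a m i * a m j / a m m" for i j
    using amm by (simp add: c_def real_sqrt_mult[symmetric])
  fix i j assume ij: "i \<in> insert m I" "j \<in> insert m I"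
  have ami: "a m i = a i m"
    using sym ij by simp
  have "a i j = c m i * c m j + (\<Sum>k\<in>I. c k i * c k j)"
  proof (cases "i = m \<or> j = m")
    case True
    have "(\<Sum>k\<in>I. c k i * c k j) = 0"
      using True I by (intro sum.neutral) (auto simp: c_def)
    moreover have "a i j = c m i * c m j"
    proof (cases "i = m")
      case True
      then show ?thesis using amm by (simp add: cm)
    next
      case False
      with \<open>i = m \<or> j = m\<close> show ?thesis using amm ami by (simp add: cm)
    qed
    ultimately show ?thesis by simp
  next
    case False
    then have "(\<Sum>k\<in>I. c k i * c k j) = (\<Sum>k\<in>I. c' k i * c' k j)"
      using I by (intro sum.cong) (auto simp: c_def)
    also have "\<dots> = a i j - a i m * a m j / a m m"
      using False ij by (intro c'[symmetric]) auto
    finally show ?thesis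
      using ami by (simp add: cm)
  qed
  then show "a i j = (\<Sum>k\<in>insert m I. c k i * c k j)"
    using I by simp
qed

lemma positive_definite_Gram_factor:
  fixes a :: "'a \<Rightarrow> 'a \<Rightarrow> real"
  assumes "finite I"
    and "\<And>i j. i \<in> I \<Longrightarrow> j \<in> I \<Longrightarrow> a i j = a j i"
    and "\<And>w. \<exists>i\<in>I. w i \<noteq> 0 \<Longrightarrow> 0 < (\<Sum>i\<in>I. \<Sum>j\<in>I. a i j * w i * w j)"
  shows "\<exists>c. \<forall>i\<in>I. \<forall>j\<in>I. a i j = (\<Sum>k\<in>I. c k i * c k j)"
  using assms
proof (induction I arbitrary: a rule: finite_induct)
  case empty
  then show ?case by simp
next
  case (insert m I)
  have "\<exists>c'. \<forall>i\<in>I. \<forall>j\<in>I. a i j - a i m * a m j / a m m = (\<Sum>k\<in>I. c' k i * c' k j)"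
  proof (rule insert.IH)
    show "a i j - a i m * a m j / a m m = a j i - a j m * a m i / a m m" if "i \<in> I" "j \<in> I" for i j
      using insert.prems(1) that by (simp add: mult.commute)
    show "0 < (\<Sum>i\<in>I. \<Sum>j\<in>I. (a i j - a i m * a m j / a m m) * w i * w j)"
      if "\<exists>i\<in>I. w i \<noteq> 0" for w
      by (rule Schur_complement_positive_definite[OF insert.hyps insert.prems that])
  qed
  then obtain c' where c': "\<And>i j. i \<in> I \<Longrightarrow> j \<in> I \<Longrightarrow> a i j - a i m * a m j / a m m = (\<Sum>k\<in>I. c' k i * c' k j)"
    by blast
  have "0 < a m m"
    using positive_definite_diagonal_pos[OF _ _ insert.prems(2)] insert.hyps by simp
  then show ?case
    using Gram_factor_insert[of I m a c'] insert.hyps insert.prems(1) c' by blast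
qed

lemma sum_innermost_to_outermost_2:
  "(\<Sum>i\<in>A. \<Sum>j\<in>B. \<Sum>p\<in>P. H i j p) = (\<Sum>p\<in>P. \<Sum>i\<in>A. \<Sum>j\<in>B. (H i j p :: 'a::comm_monoid_add))"
  by (rule trans[OF sum.cong[OF refl sum.swap] sum.swap])
lemma sum_innermost_to_outermost_3:
  "(\<Sum>i\<in>A. \<Sum>j\<in>B. \<Sum>k\<in>C. \<Sum>p\<in>P. H i j k p)
    = (\<Sum>p\<in>P. \<Sum>i\<in>A. \<Sum>j\<in>B. \<Sum>k\<in>C. (H i j k p :: 'a::comm_monoid_add))"
  by (rule trans[OF sum.cong[OF refl sum_innermost_to_outermost_2] sum.swap])
lemma sum_innermost_to_outermost_4:
  "(\<Sum>i\<in>A. \<Sum>j\<in>B. \<Sum>k\<in>C. \<Sum>l\<in>D. \<Sum>p\<in>P. H i j k l p)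
    = (\<Sum>p\<in>P. \<Sum>i\<in>A. \<Sum>j\<in>B. \<Sum>k\<in>C. \<Sum>l\<in>D. (H i j k l p :: 'a::comm_monoid_add))"
  by (rule trans[OF sum.cong[OF refl sum_innermost_to_outermost_3] sum.swap])
lemma Gram_congruence_sums:
  fixes a h c :: "'n::finite \<Rightarrow> 'n \<Rightarrow> real"
  assumes ca: "\<And>i j. a i j = (\<Sum>k\<in>UNIV. c k i * c k j)"
  defines "M \<equiv> \<lambda>p q. \<Sum>i\<in>UNIV. \<Sum>k\<in>UNIV. c p i * h i k * c q k"
  shows "(\<Sum>i\<in>UNIV. \<Sum>j\<in>UNIV. \<Sum>k\<in>UNIV. \<Sum>l\<in>UNIV. a i j * a k l * h i k * h j l)
      = (\<Sum>p\<in>UNIV. \<Sum>q\<in>UNIV. (M p q)^2)"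
    and "(\<Sum>i\<in>UNIV. \<Sum>j\<in>UNIV. a i j * h i j) = (\<Sum>p\<in>UNIV. M p p)"
proof -
  define T where "T i j k l p q = c q i * c q j * c p k * c p l * h i k * h j l" for i j k l p q
  have "(\<Sum>i\<in>UNIV. \<Sum>j\<in>UNIV. \<Sum>k\<in>UNIV. \<Sum>l\<in>UNIV. a i j * a k l * h i k * h j l)
     = (\<Sum>i\<in>UNIV. \<Sum>j\<in>UNIV. \<Sum>k\<in>UNIV. \<Sum>l\<in>UNIV. \<Sum>p\<in>UNIV. \<Sum>q\<in>UNIV. T i j k l p q)"
    unfolding ca T_def by (simp add: sum_distrib_left sum_distrib_right mult_ac)
  also have "\<dots> = (\<Sum>p\<in>UNIV. \<Sum>q\<in>UNIV. \<Sum>i\<in>UNIV. \<Sum>j\<in>UNIV. \<Sum>k\<in>UNIV. \<Sum>l\<in>UNIV. T i j k l p q)"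
    by (rule trans[OF sum_innermost_to_outermost_4 sum.cong[OF refl sum_innermost_to_outermost_4]])
  also have "\<dots> = (\<Sum>p\<in>UNIV. \<Sum>q\<in>UNIV. \<Sum>i\<in>UNIV. \<Sum>j\<in>UNIV. \<Sum>l\<in>UNIV. \<Sum>k\<in>UNIV. T i j k l p q)"
  proof -
    have "(\<Sum>k\<in>UNIV. \<Sum>l\<in>UNIV. T i j k l p q) = (\<Sum>l\<in>UNIV. \<Sum>k\<in>UNIV. T i j k l p q)" for i j p q
      by (rule sum.swap)
    then show ?thesis by simp
  qed
  also have "\<dots> = (\<Sum>p\<in>UNIV. \<Sum>q\<in>UNIV. (M q p)^2)"
    unfolding M_def T_def power2_eq_square by (simp add: sum_distrib_left sum_distrib_right mult_ac)
  also have "\<dots> = (\<Sum>p\<in>UNIV. \<Sum>q\<in>UNIV. (M p q)^2)"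
    by (rule sum.swap)
  finally show "(\<Sum>i\<in>UNIV. \<Sum>j\<in>UNIV. \<Sum>k\<in>UNIV. \<Sum>l\<in>UNIV. a i j * a k l * h i k * h j l)
      = (\<Sum>p\<in>UNIV. \<Sum>q\<in>UNIV. (M p q)^2)" .
  have "(\<Sum>i\<in>UNIV. \<Sum>j\<in>UNIV. a i j * h i j) = (\<Sum>i\<in>UNIV. \<Sum>j\<in>UNIV. \<Sum>p\<in>UNIV. c p i * h i j * c p j)"
    unfolding ca by (simp add: sum_distrib_left sum_distrib_right mult_ac)
  also have "\<dots> = (\<Sum>p\<in>UNIV. M p p)"
    unfolding M_def by (rule sum_innermost_to_outermost_2)
  finally show "(\<Sum>i\<in>UNIV. \<Sum>j\<in>UNIV. a i j * h i j) = (\<Sum>p\<in>UNIV. M p p)" .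
qed

lemma Gram_congruence_weight:
  fixes a h c :: "'n::finite \<Rightarrow> 'n \<Rightarrow> real" and b v :: "'n \<Rightarrow> real"
  assumes ca: "\<And>i j. a i j = (\<Sum>k\<in>UNIV. c k i * c k j)"
    and av: "\<And>i. (\<Sum>j\<in>UNIV. a i j * v j) = b i"
    and bv: "(\<Sum>i\<in>UNIV. b i * v i) = 1"
  defines "M \<equiv> \<lambda>p q. \<Sum>i\<in>UNIV. \<Sum>k\<in>UNIV. c p i * h i k * c q k"
    and "w \<equiv> \<lambda>p. \<Sum>j\<in>UNIV. c p j * v j"
  shows "(\<Sum>i\<in>UNIV. \<Sum>j\<in>UNIV. b i * b j * h i j) = (\<Sum>p\<in>UNIV. \<Sum>q\<in>UNIV. w p * w q * M p q)"
    and "(\<Sum>p\<in>UNIV. (w p)^2) = 1"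
proof -
  have bw: "b i = (\<Sum>p\<in>UNIV. c p i * w p)" for i
  proof -
    have "b i = (\<Sum>j\<in>UNIV. \<Sum>p\<in>UNIV. c p i * c p j * v j)"
      unfolding av[symmetric] ca by (simp add: sum_distrib_right)
    also have "\<dots> = (\<Sum>p\<in>UNIV. c p i * w p)"
      unfolding w_def by (subst sum.swap) (simp add: sum_distrib_left mult_ac)
    finally show ?thesis .
  qed
  have "(\<Sum>i\<in>UNIV. \<Sum>j\<in>UNIV. b i * b j * h i j)
      = (\<Sum>i\<in>UNIV. \<Sum>j\<in>UNIV. \<Sum>q\<in>UNIV. \<Sum>p\<in>UNIV. w p * w q * (c p i * h i j * c q j))"
    unfolding bw by (simp add: sum_distrib_left sum_distrib_right mult_ac)
  also have "\<dots> = (\<Sum>p\<in>UNIV. \<Sum>q\<in>UNIV. \<Sum>i\<in>UNIV. \<Sum>j\<in>UNIV. w p * w q * (c p i * h i j * c q j))"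
    by (rule trans[OF sum_innermost_to_outermost_3 sum.cong[OF refl sum_innermost_to_outermost_2]])
  also have "\<dots> = (\<Sum>p\<in>UNIV. \<Sum>q\<in>UNIV. w p * w q * M p q)"
    unfolding M_def by (simp add: sum_distrib_left)
  finally show "(\<Sum>i\<in>UNIV. \<Sum>j\<in>UNIV. b i * b j * h i j) = (\<Sum>p\<in>UNIV. \<Sum>q\<in>UNIV. w p * w q * M p q)" .
  have "(\<Sum>p\<in>UNIV. (w p)^2) = (\<Sum>p\<in>UNIV. \<Sum>j\<in>UNIV. w p * c p j * v j)"
    unfolding power2_eq_square by (simp add: w_def sum_distrib_left mult_ac)
  also have "\<dots> = (\<Sum>j\<in>UNIV. b j * v j)"
    unfolding bw by (subst sum.swap) (simp add: sum_distrib_left mult_ac)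
  finally show "(\<Sum>p\<in>UNIV. (w p)^2) = 1"
    using bv by simp
qed

lemma weighted_trace_inequality:
  fixes a h :: "'n::finite \<Rightarrow> 'n \<Rightarrow> real" and b v :: "'n \<Rightarrow> real"
  assumes n2: "CARD('n) \<ge> 2" and sym: "\<And>i j. a i j = a j i"
    and pos: "\<And>w. \<exists>i. w i \<noteq> 0 \<Longrightarrow> 0 < (\<Sum>i\<in>UNIV. \<Sum>j\<in>UNIV. a i j * w i * w j)"
    and av: "\<And>i. (\<Sum>j\<in>UNIV. a i j * v j) = s * b i"
    and vb: "(\<Sum>i\<in>UNIV. v i * b i) = s" and s: "s \<noteq> 0"
  shows "(\<Sum>i\<in>UNIV. \<Sum>j\<in>UNIV. \<Sum>k\<in>UNIV. \<Sum>l\<in>UNIV. a i j * a k l * h i k * h j l)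
     \<ge> (\<Sum>i\<in>UNIV. \<Sum>j\<in>UNIV. a i j * h i j)^2 / real CARD('n) + real CARD('n) / (real CARD('n) - 1) *
        ((\<Sum>i\<in>UNIV. \<Sum>j\<in>UNIV. a i j * h i j) / real CARD('n)
          - (\<Sum>i\<in>UNIV. \<Sum>j\<in>UNIV. b i * b j * h i j))^2"
proof -
  have "\<exists>c. \<forall>i\<in>UNIV. \<forall>j\<in>UNIV. a i j = (\<Sum>k\<in>(UNIV :: 'n set). c k i * c k j)"
    by (rule positive_definite_Gram_factor) (use sym pos in auto)
  then obtain c :: "'n \<Rightarrow> 'n \<Rightarrow> real" where c: "\<And>i j. a i j = (\<Sum>k\<in>UNIV. c k i * c k j)"
    by blast
  define u where "u j = v j / s" for j
  have au: "(\<Sum>j\<in>UNIV. a i j * u j) = b i" for i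
    using av[of i] s by (simp add: u_def sum_divide_distrib[symmetric])
  have bu: "(\<Sum>i\<in>UNIV. b i * u i) = 1"
    using vb s by (simp add: u_def sum_divide_distrib[symmetric] mult.commute)
  show ?thesis
    unfolding Gram_congruence_sums[OF c, where h = h] Gram_congruence_weight(1)[OF c au bu, where h = h]
    by (rule sum_sq_entries_lower_bound[OF n2 Gram_congruence_weight(2)[OF c au bu]])
qed

lemma pd_cong_open:
  assumes "open S" "x \<in> S" "\<And>y. y \<in> S \<Longrightarrow> f y = g y"
  shows "pd i f x = pd i g x"
proof -
  have "(f has_derivative D) (at x) \<longleftrightarrow> (g has_derivative D) (at x)" for D
    using has_derivative_transform_within_open[OF _ assms(1,2), of f _ UNIV g]
          has_derivative_transform_within_open[OF _ assms(1,2), of g _ UNIV f] assms(3)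
    by (metis (mono_tags))
  then show ?thesis
    unfolding pd_def frechet_derivative_def by simp
qed

lemma frechet_derivative_eq_sum_pd:
  fixes f :: "real^'n::finite \<Rightarrow> real"
  assumes "f differentiable (at x)"
  shows "frechet_derivative f (at x) v = (\<Sum>i\<in>UNIV. v$i * pd i f x)"
proof -
  have lin: "linear (frechet_derivative f (at x))"
    using assms frechet_derivative_works has_derivative_linear by blast
  have "frechet_derivative f (at x) v = frechet_derivative f (at x) (\<Sum>i\<in>UNIV. v$i *\<^sub>R axis i 1)"
    using basis_expansion[of v] by (simp add: scalar_mult_eq_scaleR)
  also have "\<dots> = (\<Sum>i\<in>UNIV. v$i * pd i f x)"
    by (simp add: linear_sum[OF lin] linear_cmul[OF lin] pd_def o_def)
  finally show ?thesis .
qed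

lemma has_derivative_along_line:
  fixes f :: "real^'n::finite \<Rightarrow> real"
  assumes "f differentiable (at (p + s *\<^sub>R e))"
  shows "((\<lambda>t. f (p + t *\<^sub>R e)) has_derivative (\<lambda>t. t * frechet_derivative f (at (p + s *\<^sub>R e)) e)) (at s)"
proof -
  let ?D = "frechet_derivative f (at (p + s *\<^sub>R e))"
  have Df: "(f has_derivative ?D) (at (p + s *\<^sub>R e))"
    using assms frechet_derivative_works by blast
  have "((\<lambda>t. p + t *\<^sub>R e) has_derivative (\<lambda>t. t *\<^sub>R e)) (at s)"
    by (auto intro!: derivative_eq_intros)
  from has_derivative_compose[OF this Df]
  have "((\<lambda>t. f (p + t *\<^sub>R e)) has_derivative (\<lambda>t. ?D (t *\<^sub>R e))) (at s)" by simp
  moreover have "?D (t *\<^sub>R e) = t * ?D e" for t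
    using Df has_derivative_linear linear_cmul by fastforce
  ultimately show ?thesis by simp
qed

lemma second_difference_mean_value:
  fixes f :: "real^'n::finite \<Rightarrow> real" and i j :: 'n
  assumes diff: "\<And>y. y \<in> ball x r \<Longrightarrow> f differentiable (at y)" and h: "0 < h" "2 * h < r"
  defines "ei \<equiv> axis i 1 :: real^'n" and "ej \<equiv> axis j 1 :: real^'n"
  shows "\<exists>\<theta>\<in>{0<..<h}. f (x + h *\<^sub>R ej + h *\<^sub>R ei) - f (x + h *\<^sub>R ei) - f (x + h *\<^sub>R ej) + f x
           = h * (pd i f (x + h *\<^sub>R ej + \<theta> *\<^sub>R ei) - pd i f (x + \<theta> *\<^sub>R ei))"
proof -
  define \<phi> where "\<phi> s = f (x + h *\<^sub>R ej + s *\<^sub>R ei) - f (x + s *\<^sub>R ei)" for s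
  have inb: "x + h *\<^sub>R ej + s *\<^sub>R ei \<in> ball x r" "x + s *\<^sub>R ei \<in> ball x r"
    if "0 \<le> s" "s \<le> h" for s
  proof -
    have "norm (h *\<^sub>R ej + s *\<^sub>R ei) \<le> h + s"
      using norm_triangle_ineq[of "h *\<^sub>R ej" "s *\<^sub>R ei"] h that by (simp add: ei_def ej_def)
    then have "norm (h *\<^sub>R ej + s *\<^sub>R ei) < r" "norm (s *\<^sub>R ei) < r"
      using h that by (simp_all add: ei_def)
    moreover have "dist x (x + v) = norm v" for v
      by (simp add: dist_norm)
    ultimately show "x + h *\<^sub>R ej + s *\<^sub>R ei \<in> ball x r" "x + s *\<^sub>R ei \<in> ball x r"
      by (simp_all add: add.assoc)
  qed
  have der: "(\<phi> has_derivative (\<lambda>t. t * (pd i f (x + h *\<^sub>R ej + s *\<^sub>R ei) - pd i f (x + s *\<^sub>R ei))))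
      (at s within {0..h})" if "0 \<le> s" "s \<le> h" for s
  proof -
    have "((\<lambda>t. f ((x + h *\<^sub>R ej) + t *\<^sub>R ei)) has_derivative (\<lambda>t. t * pd i f (x + h *\<^sub>R ej + s *\<^sub>R ei))) (at s)"
      using has_derivative_along_line[of f "x + h *\<^sub>R ej" s ei] diff inb[OF that]
      by (simp add: pd_def ei_def)
    moreover have "((\<lambda>t. f (x + t *\<^sub>R ei)) has_derivative (\<lambda>t. t * pd i f (x + s *\<^sub>R ei))) (at s)"
      using has_derivative_along_line[of f x s ei] diff inb[OF that] by (simp add: pd_def ei_def)
    ultimately have "(\<phi> has_derivative (\<lambda>t. t * pd i f (x + h *\<^sub>R ej + s *\<^sub>R ei) - t * pd i f (x + s *\<^sub>R ei))) (at s)"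
      unfolding \<phi>_def by (rule has_derivative_diff)
    then show ?thesis
      by (simp add: right_diff_distrib has_derivative_at_withinI)
  qed
  obtain \<theta> where \<theta>: "\<theta> \<in> {0<..<h}"
    and "\<phi> h - \<phi> 0 = (h - 0) * (pd i f (x + h *\<^sub>R ej + \<theta> *\<^sub>R ei) - pd i f (x + \<theta> *\<^sub>R ei))"
    using mvt_simple[OF h(1) der] by auto
  moreover have "\<phi> h - \<phi> 0 = f (x + h *\<^sub>R ej + h *\<^sub>R ei) - f (x + h *\<^sub>R ei) - f (x + h *\<^sub>R ej) + f x"
    by (simp add: \<phi>_def)
  ultimately show ?thesis
    by (metis diff_zero)
qed

lemma linear_remainder_difference:
  fixes g :: "'a::real_normed_vector \<Rightarrow> real"
  assumes rem: "\<And>y. norm (y - x) < d \<Longrightarrow> \<bar>g y - g x - L (y - x)\<bar> \<le> e * norm (y - x)"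
    and L: "linear L" and uv: "norm (u - x) < d" "norm (v - x) < d"
  shows "\<bar>g u - g v - L (u - v)\<bar> \<le> e * (norm (u - x) + norm (v - x))"
proof -
  have "g u - g v - L (u - v) = (g u - g x - L (u - x)) - (g v - g x - L (v - x))"
    using linear_diff[OF L, of "u - x" "v - x"] by simp
  then have "\<bar>g u - g v - L (u - v)\<bar> \<le> \<bar>g u - g x - L (u - x)\<bar> + \<bar>g v - g x - L (v - x)\<bar>"
    by (simp only: abs_triangle_ineq4)
  also have "\<dots> \<le> e * norm (u - x) + e * norm (v - x)"
    using rem[OF uv(1)] rem[OF uv(2)] by (rule add_mono)
  finally show ?thesis
    by (simp add: distrib_left)
qed

lemma second_difference_approx:
  fixes f :: "real^'n::finite \<Rightarrow> real" and i j :: 'n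
  assumes r: "0 < r" and diff: "\<And>y. y \<in> ball x r \<Longrightarrow> f differentiable (at y)"
    and gi: "pd i f differentiable (at x)" and e: "0 < e"
  shows "\<exists>d>0. \<forall>h. 0 < h \<and> h < d \<longrightarrow>
     \<bar>f (x + h *\<^sub>R axis j 1 + h *\<^sub>R axis i 1) - f (x + h *\<^sub>R axis i 1) - f (x + h *\<^sub>R axis j 1) + f x
       - h^2 * pd j (pd i f) x\<bar> \<le> 3 * e * h^2"
proof -
  let ?g = "pd i f"
  let ?L = "frechet_derivative (pd i f) (at x)"
  define ei where "ei = (axis i 1 :: real^'n)"
  define ej where "ej = (axis j 1 :: real^'n)"
  have Lg: "(?g has_derivative ?L) (at x)"
    using gi frechet_derivative_works by blast
  then obtain d where d: "0 < d"
    "\<And>y. norm (y - x) < d \<Longrightarrow> \<bar>?g y - ?g x - ?L (y - x)\<bar> \<le> e * norm (y - x)"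
    using e unfolding has_derivative_at_alt by force
  have lin: "linear ?L"
    using Lg has_derivative_linear by blast
  show ?thesis
  proof (intro exI[of _ "min (d/2) (r/2)"] conjI allI impI)
    show "min (d/2) (r/2) > 0" using d r by simp
    fix h :: real assume h: "0 < h \<and> h < min (d/2) (r/2)"
    obtain \<theta> where \<theta>: "\<theta> \<in> {0<..<h}"
      and mv: "f (x + h *\<^sub>R ej + h *\<^sub>R ei) - f (x + h *\<^sub>R ei) - f (x + h *\<^sub>R ej) + f x
           = h * (?g (x + h *\<^sub>R ej + \<theta> *\<^sub>R ei) - ?g (x + \<theta> *\<^sub>R ei))"
      using second_difference_mean_value[where x = x and r = r and h = h and i = i and j = j, OF diff] h
      unfolding ei_def ej_def by auto
    define y1 where "y1 = x + h *\<^sub>R ej + \<theta> *\<^sub>R ei"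
    define y2 where "y2 = x + \<theta> *\<^sub>R ei"
    have n1: "norm (y1 - x) \<le> 2 * h"
      using norm_triangle_ineq[of "h *\<^sub>R ej" "\<theta> *\<^sub>R ei"] \<theta> h by (simp add: y1_def ei_def ej_def)
    have n2: "norm (y2 - x) \<le> h"
      using \<theta> by (simp add: y2_def ei_def)
    have "?L (y1 - y2) = h * pd j (pd i f) x"
      by (simp add: y1_def y2_def linear_cmul[OF lin] pd_def ej_def)
    then have "f (x + h *\<^sub>R ej + h *\<^sub>R ei) - f (x + h *\<^sub>R ei) - f (x + h *\<^sub>R ej) + f x - h^2 * pd j (pd i f) x
        = h * (?g y1 - ?g y2 - ?L (y1 - y2))"
      unfolding mv by (simp add: y1_def y2_def power2_eq_square algebra_simps)
    then have "\<bar>f (x + h *\<^sub>R ej + h *\<^sub>R ei) - f (x + h *\<^sub>R ei) - f (x + h *\<^sub>R ej) + f x - h^2 * pd j (pd i f) x\<bar>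
        = h * \<bar>?g y1 - ?g y2 - ?L (y1 - y2)\<bar>"
      using h by (simp add: abs_mult)
    also have "\<dots> \<le> h * (e * (norm (y1 - x) + norm (y2 - x)))"
      using n1 n2 h by (intro mult_left_mono linear_remainder_difference[OF d(2) lin]) auto
    also have "\<dots> \<le> h * (e * (2 * h + h))"
      using n1 n2 h e by (intro mult_left_mono) auto
    also have "\<dots> = 3 * e * h^2"
      by (simp add: power2_eq_square algebra_simps)
    finally show "\<bar>f (x + h *\<^sub>R axis j 1 + h *\<^sub>R axis i 1) - f (x + h *\<^sub>R axis i 1) - f (x + h *\<^sub>R axis j 1) + f x
       - h^2 * pd j (pd i f) x\<bar> \<le> 3 * e * h^2"
      by (simp add: ei_def ej_def)
  qed
qed

text \<open>Schwarz's theorem (Peano's version): both mixed partials are limits of the same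
  symmetric second difference divided by \<open>h\<^sup>2\<close>.\<close>

lemma pd_pd_commute:
  fixes f :: "real^'n::finite \<Rightarrow> real"
  assumes r: "0 < r" and diff: "\<And>y. y \<in> ball x r \<Longrightarrow> f differentiable (at y)"
    and gi: "pd i f differentiable (at x)" and gj: "pd j f differentiable (at x)"
  shows "pd j (pd i f) x = pd i (pd j f) x"
proof (rule ccontr)
  let ?A = "pd j (pd i f) x" and ?B = "pd i (pd j f) x"
  let ?\<Delta> = "\<lambda>h. f (x + h *\<^sub>R axis j 1 + h *\<^sub>R axis i 1) - f (x + h *\<^sub>R axis i 1) - f (x + h *\<^sub>R axis j 1) + f x"
  assume "?A \<noteq> ?B"
  define e where "e = \<bar>?A - ?B\<bar> / 12"
  have e: "0 < e" using \<open>?A \<noteq> ?B\<close> by (simp add: e_def)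
  obtain d1 where d1: "0 < d1" "\<forall>h. 0 < h \<and> h < d1 \<longrightarrow> \<bar>?\<Delta> h - h^2 * ?A\<bar> \<le> 3 * e * h^2"
    using second_difference_approx[OF r diff gi e] by blast
  have \<Delta>_sym: "?\<Delta> h = f (x + h *\<^sub>R axis i 1 + h *\<^sub>R axis j 1) - f (x + h *\<^sub>R axis j 1)
      - f (x + h *\<^sub>R axis i 1) + f x" for h
    by (simp add: algebra_simps)
  obtain d2 where d2: "0 < d2" "\<forall>h. 0 < h \<and> h < d2 \<longrightarrow> \<bar>?\<Delta> h - h^2 * ?B\<bar> \<le> 3 * e * h^2"
    unfolding \<Delta>_sym using second_difference_approx[OF r diff gj e, where j = i] by blast
  define h where "h = min d1 d2 / 2"
  have h: "0 < h" "h < d1" "h < d2" using d1 d2 by (auto simp: h_def)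
  have "h^2 * \<bar>?A - ?B\<bar> = \<bar>h^2 * (?A - ?B)\<bar>"
    by (simp add: abs_mult)
  also have "\<dots> = \<bar>(?\<Delta> h - h^2 * ?B) - (?\<Delta> h - h^2 * ?A)\<bar>"
    by (simp add: algebra_simps)
  also have "\<dots> \<le> 3 * e * h^2 + 3 * e * h^2"
    using d1(2) d2(2) h abs_triangle_ineq4[of "?\<Delta> h - h^2 * ?B" "?\<Delta> h - h^2 * ?A"]
    by (smt (verit))
  also have "\<dots> = h^2 * (6 * e)"
    by simp
  finally have "\<bar>?A - ?B\<bar> \<le> 6 * e" using h(1) by simp
  then show False using e by (simp add: e_def)
qed

lemma Euler_identity:
  fixes F :: "real^'n::finite \<Rightarrow> real"
  assumes hom: "\<And>t x. 0 < t \<Longrightarrow> F (t *\<^sub>R x) = t * F x"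
    and dF: "F differentiable (at y)"
  shows "(\<Sum>i\<in>UNIV. y$i * pd i F y) = F y"
proof -
  let ?D = "frechet_derivative F (at y)"
  have "((\<lambda>t. F (t *\<^sub>R y)) has_derivative (\<lambda>t. t * ?D y)) (at 1)"
    using has_derivative_along_line[of F 0 1 y] dF by simp
  then have "((\<lambda>t. t * F y) has_derivative (\<lambda>t. t * ?D y)) (at 1)"
    by (rule has_derivative_transform_within_open[where s = "{0<..}"]) (auto simp: hom)
  moreover have "((\<lambda>t. t * F y) has_derivative (\<lambda>t. t * F y)) (at 1)"
    by (auto intro!: derivative_eq_intros)
  ultimately have "(\<lambda>t. t * ?D y) = (\<lambda>t. t * F y)"
    by (rule has_derivative_unique)
  then have "?D y = F y" by (metis mult_1)
  then show ?thesis
    using frechet_derivative_eq_sum_pd[OF dF, of y] by simp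
qed

lemma pd_positively_homogeneous_0:
  fixes F :: "real^'n::finite \<Rightarrow> real"
  assumes hom: "\<And>t x. 0 < t \<Longrightarrow> F (t *\<^sub>R x) = t * F x"
    and dF: "\<And>y. y \<noteq> 0 \<Longrightarrow> F differentiable (at y)"
    and y: "y \<noteq> 0" and t: "0 < t"
  shows "pd i F (t *\<^sub>R y) = pd i F y"
proof -
  let ?D1 = "frechet_derivative F (at (t *\<^sub>R y))"
  let ?D = "frechet_derivative F (at y)"
  have "t *\<^sub>R y \<noteq> 0"
    using y t by simp
  then have D1: "(F has_derivative ?D1) (at (t *\<^sub>R y))"
    using dF frechet_derivative_works by blast
  have D: "(F has_derivative ?D) (at y)"
    using dF[OF y] frechet_derivative_works by blast
  have "((\<lambda>z. t *\<^sub>R z) has_derivative (\<lambda>h. t *\<^sub>R h)) (at y)"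
    by (auto intro!: derivative_eq_intros)
  from has_derivative_compose[OF this D1]
  have "((\<lambda>z. F (t *\<^sub>R z)) has_derivative (\<lambda>h. ?D1 (t *\<^sub>R h))) (at y)" .
  moreover have "(\<lambda>z. F (t *\<^sub>R z)) = (\<lambda>z. t * F z)"
    using hom t by auto
  moreover have "((\<lambda>z. t * F z) has_derivative (\<lambda>h. t * ?D h)) (at y)"
    using D by (auto intro!: derivative_eq_intros)
  ultimately have "(\<lambda>h. ?D1 (t *\<^sub>R h)) = (\<lambda>h. t * ?D h)"
    using has_derivative_unique by metis
  then have "?D1 (t *\<^sub>R axis i 1) = t * ?D (axis i 1)"
    by metis
  moreover have "linear ?D1"
    using D1 has_derivative_linear by blast
  ultimately show ?thesis
    using t unfolding pd_def by (simp add: linear_cmul)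
qed

lemma Euler_identity_pd:
  fixes F :: "real^'n::finite \<Rightarrow> real"
  assumes hom: "\<And>t x. 0 < t \<Longrightarrow> F (t *\<^sub>R x) = t * F x"
    and dF: "\<And>y. y \<noteq> 0 \<Longrightarrow> F differentiable (at y)"
    and dg: "pd i F differentiable (at y)" and y: "y \<noteq> 0"
  shows "(\<Sum>j\<in>UNIV. y$j * pd j (pd i F) y) = 0"
proof -
  let ?D = "frechet_derivative (pd i F) (at y)"
  have "((\<lambda>t. pd i F (t *\<^sub>R y)) has_derivative (\<lambda>t. t * ?D y)) (at 1)"
    using has_derivative_along_line[of "pd i F" 0 1 y] dg by simp
  then have "((\<lambda>t. pd i F y) has_derivative (\<lambda>t. t * ?D y)) (at 1)"
    by (rule has_derivative_transform_within_open[where s = "{0<..}"])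
      (auto simp: pd_positively_homogeneous_0[OF hom dF y])
  moreover have "((\<lambda>t. pd i F y) has_derivative (\<lambda>t. 0)) (at 1)"
    by (auto intro!: derivative_eq_intros)
  ultimately have "(\<lambda>t. t * ?D y) = (\<lambda>t. 0)"
    by (rule has_derivative_unique)
  then have "?D y = 0" by (metis mult_1)
  then show ?thesis
    using frechet_derivative_eq_sum_pd[OF dg, of y] by simp
qed

lemma pd_pd_scaled_square:
  fixes F :: "real^'n::finite \<Rightarrow> real"
  assumes dF: "\<And>y. y \<noteq> 0 \<Longrightarrow> F differentiable (at y)"
    and dg: "pd j F differentiable (at x)" and x: "x \<noteq> 0"
  shows "pd i (pd j (\<lambda>z. c * (F z)^2)) x = 2 * c * (pd i F x * pd j F x + F x * pd i (pd j F) x)"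
proof -
  have "pd j (\<lambda>z. c * (F z)^2) y = 2 * c * (F y * pd j F y)" if y: "y \<noteq> 0" for y
  proof -
    have "((\<lambda>z. c * (F z)^2) has_derivative
        (\<lambda>h. c * (frechet_derivative F (at y) h * F y + F y * frechet_derivative F (at y) h))) (at y)"
      unfolding power2_eq_square
      using dF[OF y] frechet_derivative_works by (auto intro!: derivative_eq_intros)
    from fun_cong[OF frechet_derivative_at[OF this], of "axis j 1"] show ?thesis
      unfolding pd_def by (simp add: algebra_simps)
  qed
  then have "pd i (pd j (\<lambda>z. c * (F z)^2)) x = pd i (\<lambda>y. 2 * c * (F y * pd j F y)) x"
    using x by (intro pd_cong_open[of "-{0}"]) auto
  also have "\<dots> = 2 * c * (pd i F x * pd j F x + F x * pd i (pd j F) x)"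
  proof -
    have "((\<lambda>y. 2 * c * (F y * pd j F y)) has_derivative
        (\<lambda>h. 2 * c * (frechet_derivative F (at x) h * pd j F x + F x * frechet_derivative (pd j F) (at x) h))) (at x)"
      using dF[OF x] dg frechet_derivative_works by (auto intro!: derivative_eq_intros)
    from fun_cong[OF frechet_derivative_at[OF this], of "axis i 1"] show ?thesis
      unfolding pd_def by simp
  qed
  finally show ?thesis .
qed

context
  fixes F :: "real^'n::finite \<Rightarrow> real" and \<xi> :: "real^'n"
  assumes hom: "\<And>t y. 0 < t \<Longrightarrow> F (t *\<^sub>R y) = t * F y"
    and dF: "\<And>y. y \<noteq> 0 \<Longrightarrow> F differentiable (at y)"
    and dpF: "\<And>i. pd i F differentiable (at \<xi>)"
    and \<xi>: "\<xi> \<noteq> 0"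
begin

lemma homogeneous_pd_pd_commute: "pd j (pd i F) \<xi> = pd i (pd j F) \<xi>"
proof (rule pd_pd_commute[of "norm \<xi>"])
  show "0 < norm \<xi>" using \<xi> by simp
  show "F differentiable (at y)" if "y \<in> ball \<xi> (norm \<xi>)" for y
    using that dF by (metis dist_0_norm dist_commute less_irrefl mem_ball)
qed (rule dpF)+

lemma pd_pd_half_square:
  "pd i (pd j (\<lambda>z. (F z)^2 / 2)) \<xi> = pd i F \<xi> * pd j F \<xi> + F \<xi> * pd i (pd j F) \<xi>"
  using pd_pd_scaled_square[OF dF dpF \<xi>, where i = i and c = "1/2"] by simp

lemma pd_pd_half_square_symmetric:
  "pd i (pd j (\<lambda>z. (F z)^2 / 2)) \<xi> = pd j (pd i (\<lambda>z. (F z)^2 / 2)) \<xi>"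
  unfolding pd_pd_half_square homogeneous_pd_pd_commute[of i j] by simp

lemma pd_pd_half_square_positive_definite:
  assumes "\<And>v. v \<noteq> 0 \<Longrightarrow> 0 < (\<Sum>i\<in>UNIV. \<Sum>j\<in>UNIV. pd i (pd j (\<lambda>z. (F z)^2)) \<xi> * v$i * v$j)"
    and "\<exists>i. w i \<noteq> 0"
  shows "0 < (\<Sum>i\<in>UNIV. \<Sum>j\<in>UNIV. pd i (pd j (\<lambda>z. (F z)^2 / 2)) \<xi> * w i * w j)"
proof -
  have "(\<chi> i. w i) \<noteq> 0"
    using assms(2) by (metis vec_lambda_beta zero_index)
  from assms(1)[OF this]
  have "0 < (\<Sum>i\<in>UNIV. \<Sum>j\<in>UNIV. pd i (pd j (\<lambda>z. (F z)^2)) \<xi> * w i * w j)"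
    by simp
  moreover have "pd i (pd j (\<lambda>z. (F z)^2)) \<xi> = 2 * pd i (pd j (\<lambda>z. (F z)^2 / 2)) \<xi>" for i j
    using pd_pd_scaled_square[OF dF dpF \<xi>, where c = 1] by (simp add: pd_pd_half_square)
  ultimately have "0 < (\<Sum>i\<in>UNIV. \<Sum>j\<in>UNIV. 2 * pd i (pd j (\<lambda>z. (F z)^2 / 2)) \<xi> * w i * w j)"
    by simp
  then show ?thesis
    by (simp add: sum_distrib_left[symmetric] mult.assoc)
qed

lemma pd_pd_half_square_mult_point:
  "(\<Sum>j\<in>UNIV. pd i (pd j (\<lambda>z. (F z)^2 / 2)) \<xi> * \<xi>$j) = F \<xi> * pd i F \<xi>"
proof -
  have "(\<Sum>j\<in>UNIV. pd i (pd j (\<lambda>z. (F z)^2 / 2)) \<xi> * \<xi>$j)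
      = pd i F \<xi> * (\<Sum>j\<in>UNIV. \<xi>$j * pd j F \<xi>) + F \<xi> * (\<Sum>j\<in>UNIV. \<xi>$j * pd j (pd i F) \<xi>)"
    by (simp add: pd_pd_half_square homogeneous_pd_pd_commute sum.distrib sum_distrib_left algebra_simps)
  also have "\<dots> = pd i F \<xi> * F \<xi>"
    using Euler_identity[OF hom dF[OF \<xi>]] Euler_identity_pd[OF hom dF dpF \<xi>] by simp
  finally show ?thesis by simp
qed

end

theorem lemma2p4:
  fixes F :: "real^'n \<Rightarrow> real" and u :: "real^'n \<Rightarrow> real"
    and U :: "(real^'n) set" and x :: "real^'n"
  assumes "CARD('n) \<ge> 2"
    and "strongly_convex_Norm F"
    and "Ck 3 F (- {0})"
    and "open U" and "Ck 2 u U"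
    and "x \<in> U" and "grad u x \<noteq> 0"
  shows "(let n = real CARD('n);
              a = (\<lambda>i j. pd i (pd j (\<lambda>\<xi>. (F \<xi>)^2 / 2)) (grad u x));
              Fd = (\<lambda>i. pd i F (grad u x));
              h = (\<lambda>i j. pd i (pd j u) x);
              tr = (\<Sum>i\<in>UNIV. \<Sum>j\<in>UNIV. a i j * h i j)
          in (\<Sum>i\<in>UNIV. \<Sum>j\<in>UNIV. \<Sum>k\<in>UNIV. \<Sum>l\<in>UNIV. a i j * a k l * h i k * h j l)
             \<ge> tr^2 / n + n / (n - 1) * (tr / n - (\<Sum>i\<in>UNIV. \<Sum>j\<in>UNIV. Fd i * Fd j * h i j))^2)"
proof -
  let ?\<xi> = "grad u x"
  have norm: "is_Norm F" and convex: "\<And>v. v \<noteq> 0 \<Longrightarrow>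
      0 < (\<Sum>i\<in>UNIV. \<Sum>j\<in>UNIV. pd i (pd j (\<lambda>z. (F z)^2)) ?\<xi> * v$i * v$j)"
    using assms(2,7) unfolding strongly_convex_Norm_def by auto
  have hom: "\<And>t y. 0 < t \<Longrightarrow> F (t *\<^sub>R y) = t * F y" and "F ?\<xi> \<noteq> 0"
    using norm assms(7) unfolding is_Norm_def by auto
  have dF: "\<And>y. y \<noteq> 0 \<Longrightarrow> F differentiable (at y)"
    and dpF: "\<And>i. pd i F differentiable (at ?\<xi>)"
    using assms(3,7) by (auto simp: eval_nat_numeral)
  let ?a = "\<lambda>i j. pd i (pd j (\<lambda>\<xi>. (F \<xi>)^2 / 2)) ?\<xi>"
  show ?thesis
    unfolding Let_def
  proof (rule weighted_trace_inequality[where v = "\<lambda>j. ?\<xi>$j" and s = "F ?\<xi>", OF assms(1)])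
    show "?a i j = ?a j i" for i j
      by (rule pd_pd_half_square_symmetric[OF hom dF dpF assms(7)])
    show "0 < (\<Sum>i\<in>UNIV. \<Sum>j\<in>UNIV. ?a i j * w i * w j)" if "\<exists>i. w i \<noteq> 0" for w
      by (rule pd_pd_half_square_positive_definite[OF hom dF dpF assms(7) convex that])
    show "(\<Sum>j\<in>UNIV. ?a i j * ?\<xi>$j) = F ?\<xi> * pd i F ?\<xi>" for i
      by (rule pd_pd_half_square_mult_point[OF hom dF dpF assms(7)])
    show "(\<Sum>i\<in>UNIV. ?\<xi>$i * pd i F ?\<xi>) = F ?\<xi>"
      by (rule Euler_identity[OF hom dF[OF assms(7)]])
  qed fact
qed

end
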